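(* Consider TD-SVRG (Algorithm 1, as defined in the context) run on a dataset with any step size $\alpha>0$ and any inner-loop length $M\ge 1$. Then for every epoch $m\ge 1$, $$2\alpha M\,\mathbb E[f_d(\tilde\theta_m)]-2M\alpha^2\,\mathbb E[w(\tilde\theta_m)]\le \mathbb E\big[\|\tilde\theta_{m-1}-\theta^*\|^2\big]+2\alpha^2M\,\mathbb E[w(\tilde\theta_{m-1})],$$ where the expectations are over all randomness of the algorithm (all previous epochs and the samples drawn in epoch $m$).
   Context: Finite-sample setting. Let $\mathcal S$ be a finite state space, $\phi:\mathcal S\to\mathbb R^d$ a feature map with $\|\phi(s)\|_2\le 1$ for all $s$, $r:\mathcal S\times\mathcal S\to\mathbb R$ a reward function and $\gamma\in[0,1)$. For a pair of states $(s,s')$ and $\theta\in\mathbb R^d$ let $g_{s,s'}(\theta)=(r(s,s')+\gamma\phi(s')^T\theta-\phi(s)^T\theta)\phi(s)$. A dataset is a state trajectory $s_1,\dots,s_{N+1}$, giving the $N$ pairs $(s_t,s_{t+1})$, $t=1,\dots,N$. Let $A_d=\frac1N\sum_{t=1}^N\phi(s_t)(\phi(s_t)-\gamma\phi(s_{t+1}))^T$ and $b_d=\frac1N\sum_{t=1}^N r(s_t,s_{t+1})\phi(s_t)$, so that $\bar g(\theta):=\frac1N\sum_{t=1}^N g_{s_t,s_{t+1}}(\theta)=-A_d\theta+b_d$. Assume $A_d$ is nonsingular and let $\theta^*=A_d^{-1}b_d$. Define $f_d(\theta)=(\theta-\theta^* )^TA_d(\theta-\theta^* )$ and $w(\theta)=\frac1N\sum_{t=1}^N\|g_{s_t,s_{t+1}}(\theta)-g_{s_t,s_{t+1}}(\theta^*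 )\|^2$. Algorithm 1 (TD-SVRG): given $\alpha>0$, an integer $M\ge1$ and an initial $\tilde\theta_0\in\mathbb R^d$, for epochs $m=1,2,\dots$: set $\tilde\theta=\tilde\theta_{m-1}$, compute $\bar g(\tilde\theta)$, set $\theta_0=\tilde\theta$; for $t=1,\dots,M$ draw an index $i_t$ uniformly from $\{1,\dots,N\}$, independently of everything else, put $(s,s')=(s_{i_t},s_{i_t+1})$, $v_t=g_{s,s'}(\theta_{t-1})-g_{s,s'}(\tilde\theta)+\bar g(\tilde\theta)$ and $\theta_t=\theta_{t-1}+\alpha v_t$; finally set $\tilde\theta_m=\theta_{t'}$ where $t'$ is drawn uniformly from $\{0,\dots,M-1\}$ independently of everything else. *)

theory Defs
  imports "HOL-Analysis.Analysis" "HOL-Probability.Probability"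
begin

text \<open>Dataset: trajectory s :: nat => 'a, states s 1, ..., s (N+1), giving pairs (s t, s (t+1)), t = 1..N.
  Features phi :: 'a => real^'d, reward r, discount gamma.\<close>

definition tdg :: "('a \<Rightarrow> real^'d) \<Rightarrow> ('a \<Rightarrow> 'a \<Rightarrow> real) \<Rightarrow> real \<Rightarrow> 'a \<Rightarrow> 'a \<Rightarrow> real^'d \<Rightarrow> real^'d" where
  "tdg \<phi> r \<gamma> s s' \<theta> = (r s s' + \<gamma> * (\<phi> s' \<bullet> \<theta>) - \<phi> s \<bullet> \<theta>) *\<^sub>R \<phi> s"

definition gbar :: "('a \<Rightarrow> real^'d) \<Rightarrow> ('a \<Rightarrow> 'a \<Rightarrow> real) \<Rightarrow> real \<Rightarrow> (nat \<Rightarrow> 'a) \<Rightarrow> nat \<Rightarrow> real^'d \<Rightarrow> real^'d" where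
  "gbar \<phi> r \<gamma> s N \<theta> = (1 / real N) *\<^sub>R (\<Sum>t\<in>{1..N}. tdg \<phi> r \<gamma> (s t) (s (Suc t)) \<theta>)"

definition A_d :: "('a \<Rightarrow> real^'d) \<Rightarrow> real \<Rightarrow> (nat \<Rightarrow> 'a) \<Rightarrow> nat \<Rightarrow> real^'d^'d" where
  "A_d \<phi> \<gamma> s N = (\<chi> i j. (1 / real N) *
      (\<Sum>t\<in>{1..N}. (\<phi> (s t)) $ i * (\<phi> (s t) - \<gamma> *\<^sub>R \<phi> (s (Suc t))) $ j))"

definition b_d :: "('a \<Rightarrow> real^'d) \<Rightarrow> ('a \<Rightarrow> 'a \<Rightarrow> real) \<Rightarrow> (nat \<Rightarrow> 'a) \<Rightarrow> nat \<Rightarrow> real^'d" where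
  "b_d \<phi> r s N = (1 / real N) *\<^sub>R (\<Sum>t\<in>{1..N}. r (s t) (s (Suc t)) *\<^sub>R \<phi> (s t))"

definition theta_star :: "('a \<Rightarrow> real^'d) \<Rightarrow> ('a \<Rightarrow> 'a \<Rightarrow> real) \<Rightarrow> real \<Rightarrow> (nat \<Rightarrow> 'a) \<Rightarrow> nat \<Rightarrow> real^'d" where
  "theta_star \<phi> r \<gamma> s N = matrix_inv (A_d \<phi> \<gamma> s N) *v b_d \<phi> r s N"

definition f_d :: "('a \<Rightarrow> real^'d) \<Rightarrow> ('a \<Rightarrow> 'a \<Rightarrow> real) \<Rightarrow> real \<Rightarrow> (nat \<Rightarrow> 'a) \<Rightarrow> nat \<Rightarrow> real^'d \<Rightarrow> real" where
  "f_d \<phi> r \<gamma> s N \<theta> = (\<theta> - theta_star \<phi> r \<gamma> s N) \<bullet> (A_d \<phi> \<gamma> s N *v (\<theta> - theta_star \<phi> r \<gamma> s N))"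

definition w_d :: "('a \<Rightarrow> real^'d) \<Rightarrow> ('a \<Rightarrow> 'a \<Rightarrow> real) \<Rightarrow> real \<Rightarrow> (nat \<Rightarrow> 'a) \<Rightarrow> nat \<Rightarrow> real^'d \<Rightarrow> real" where
  "w_d \<phi> r \<gamma> s N \<theta> = (1 / real N) * (\<Sum>t\<in>{1..N}.
      (norm (tdg \<phi> r \<gamma> (s t) (s (Suc t)) \<theta> - tdg \<phi> r \<gamma> (s t) (s (Suc t)) (theta_star \<phi> r \<gamma> s N)))\<^sup>2)"

fun svrg_inner :: "('a \<Rightarrow> real^'d) \<Rightarrow> ('a \<Rightarrow> 'a \<Rightarrow> real) \<Rightarrow> real \<Rightarrow> (nat \<Rightarrow> 'a) \<Rightarrow> nat \<Rightarrow> real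
     \<Rightarrow> real^'d \<Rightarrow> nat \<Rightarrow> (real^'d) pmf" where
  "svrg_inner \<phi> r \<gamma> s N \<alpha> \<theta>t 0 = return_pmf \<theta>t"
| "svrg_inner \<phi> r \<gamma> s N \<alpha> \<theta>t (Suc k) =
     bind_pmf (svrg_inner \<phi> r \<gamma> s N \<alpha> \<theta>t k) (\<lambda>\<theta>.
       map_pmf (\<lambda>i. \<theta> + \<alpha> *\<^sub>R (tdg \<phi> r \<gamma> (s i) (s (Suc i)) \<theta> - tdg \<phi> r \<gamma> (s i) (s (Suc i)) \<theta>t
                                 + gbar \<phi> r \<gamma> s N \<theta>t))
               (pmf_of_set {1..N}))"

definition svrg_epoch :: "('a \<Rightarrow> real^'d) \<Rightarrow> ('a \<Rightarrow> 'a \<Rightarrow> real) \<Rightarrow> real \<Rightarrow> (nat \<Rightarrow> 'a) \<Rightarrow> nat \<Rightarrow> real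
     \<Rightarrow> nat \<Rightarrow> real^'d \<Rightarrow> (real^'d) pmf" where
  "svrg_epoch \<phi> r \<gamma> s N \<alpha> M \<theta>t =
     bind_pmf (pmf_of_set {0..<M}) (\<lambda>t'. svrg_inner \<phi> r \<gamma> s N \<alpha> \<theta>t t')"

fun svrg_run :: "('a \<Rightarrow> real^'d) \<Rightarrow> ('a \<Rightarrow> 'a \<Rightarrow> real) \<Rightarrow> real \<Rightarrow> (nat \<Rightarrow> 'a) \<Rightarrow> nat \<Rightarrow> real
     \<Rightarrow> nat \<Rightarrow> real^'d \<Rightarrow> nat \<Rightarrow> (real^'d) pmf" where
  "svrg_run \<phi> r \<gamma> s N \<alpha> M \<theta>0 0 = return_pmf \<theta>0"
| "svrg_run \<phi> r \<gamma> s N \<alpha> M \<theta>0 (Suc m) =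
     bind_pmf (svrg_run \<phi> r \<gamma> s N \<alpha> M \<theta>0 m) (svrg_epoch \<phi> r \<gamma> s N \<alpha> M)"

end

theory Submission
  imports Defs
begin

text \<open>Within an epoch with snapshot \<open>\<theta>\<^sub>t\<close>, the direction
  \<open>v = g\<^sub>i(\<theta>) - g\<^sub>i(\<theta>\<^sub>t) + gbar(\<theta>\<^sub>t)\<close> has mean \<open>gbar(\<theta>) = -A\<^sub>d(\<theta> - \<theta>\<^sup>*)\<close> over the uniform
  index \<open>i\<close>, so one inner step changes the expected squared distance to \<open>\<theta>\<^sup>*\<close> by
  \<open>-2\<alpha> f\<^sub>d(\<theta>) + \<alpha>\<^sup>2 E\<parallel>v\<parallel>\<^sup>2\<close>. Writing \<open>v\<close> as \<open>(g\<^sub>i(\<theta>) - g\<^sub>i(\<theta>\<^sup>*))\<close> minus the centred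
  \<open>g\<^sub>i(\<theta>\<^sub>t) - g\<^sub>i(\<theta>\<^sup>*)\<close>, and using that a variance is at most the second moment, gives
  \<open>E\<parallel>v\<parallel>\<^sup>2 \<le> 2 w(\<theta>) + 2 w(\<theta>\<^sub>t)\<close>. Summing over the \<open>M\<close> inner steps telescopes; the last
  squared distance is dropped, and since the epoch output is a uniformly chosen inner iterate
  the sums become \<open>M\<close> times expectations at \<open>\<theta>\<^sub>m\<close>. Integrating over \<open>\<theta>\<^sub>m\<^sub>-\<^sub>1\<close> finishes.\<close>

lemma A_d_mult_vec:
  "A_d \<phi> \<gamma> s N *v c =
     (1 / real N) *\<^sub>R (\<Sum>t\<in>{1..N}. ((\<phi> (s t) - \<gamma> *\<^sub>R \<phi> (s (Suc t))) \<bullet> c) *\<^sub>R \<phi> (s t))"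
proof (subst vec_eq_iff, intro allI)
  fix i
  have "(\<Sum>j\<in>UNIV. \<Sum>n\<in>{1..N}. c $ j * (\<phi> (s n) $ i * (\<phi> (s n) $ j - \<gamma> * \<phi> (s (Suc n)) $ j)) / real N)
      = (\<Sum>n\<in>{1..N}. \<Sum>j\<in>UNIV. c $ j * (\<phi> (s n) $ i * (\<phi> (s n) $ j - \<gamma> * \<phi> (s (Suc n)) $ j)) / real N)"
    by (rule sum.swap)
  then show "(A_d \<phi> \<gamma> s N *v c) $ i =
      ((1 / real N) *\<^sub>R (\<Sum>t\<in>{1..N}. ((\<phi> (s t) - \<gamma> *\<^sub>R \<phi> (s (Suc t))) \<bullet> c) *\<^sub>R \<phi> (s t))) $ i"
    by (simp add: A_d_def matrix_vector_mult_def inner_vec_def sum_distrib_left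
        sum_distrib_right sum_component mult_ac sum_divide_distrib)
qed

lemma gbar_eq_b_d_minus_A_d:
  "gbar \<phi> r \<gamma> s N \<theta> = b_d \<phi> r s N - A_d \<phi> \<gamma> s N *v \<theta>"
proof -
  have "tdg \<phi> r \<gamma> (s t) (s (Suc t)) \<theta> = r (s t) (s (Suc t)) *\<^sub>R \<phi> (s t)
      - ((\<phi> (s t) - \<gamma> *\<^sub>R \<phi> (s (Suc t))) \<bullet> \<theta>) *\<^sub>R \<phi> (s t)" for t
    by (simp add: tdg_def inner_diff_left algebra_simps)
  then show ?thesis
    by (simp add: gbar_def b_d_def A_d_mult_vec sum_subtractf scaleR_diff_right)
qed

lemma A_d_theta_star:
  assumes "invertible (A_d \<phi> \<gamma> s N)"
  shows "A_d \<phi> \<gamma> s N *v theta_star \<phi> r \<gamma> s N = b_d \<phi> r s N"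
proof -
  let ?A = "A_d \<phi> \<gamma> s N"
  have "?A ** matrix_inv ?A = mat 1 \<and> matrix_inv ?A ** ?A = mat 1"
    using assms unfolding invertible_def matrix_inv_def by (rule someI_ex)
  then show ?thesis
    by (simp add: theta_star_def matrix_vector_mul_assoc)
qed

lemma gbar_theta_star:
  assumes "invertible (A_d \<phi> \<gamma> s N)"
  shows "gbar \<phi> r \<gamma> s N (theta_star \<phi> r \<gamma> s N) = 0"
  using A_d_theta_star[OF assms] by (simp add: gbar_eq_b_d_minus_A_d)

lemma tdg_diff:
  "tdg \<phi> r \<gamma> x y \<theta> - tdg \<phi> r \<gamma> x y \<theta>' = (\<gamma> * (\<phi> y \<bullet> (\<theta> - \<theta>')) - \<phi> x \<bullet> (\<theta> - \<theta>')) *\<^sub>R \<phi> x"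
  by (simp add: tdg_def inner_diff_right algebra_simps)

lemma f_d_eq_mean_inner_tdg_diff:
  "f_d \<phi> r \<gamma> s N \<theta> = - (1 / real N) * (\<Sum>t\<in>{1..N}. (\<theta> - theta_star \<phi> r \<gamma> s N) \<bullet>
      (tdg \<phi> r \<gamma> (s t) (s (Suc t)) \<theta> - tdg \<phi> r \<gamma> (s t) (s (Suc t)) (theta_star \<phi> r \<gamma> s N)))"
proof -
  define c where "c = \<theta> - theta_star \<phi> r \<gamma> s N"
  have "f_d \<phi> r \<gamma> s N \<theta> =
      (1 / real N) * (\<Sum>t\<in>{1..N}. ((\<phi> (s t) - \<gamma> *\<^sub>R \<phi> (s (Suc t))) \<bullet> c) * (c \<bullet> \<phi> (s t)))"
    by (simp add: f_d_def A_d_mult_vec inner_sum_right c_def[symmetric])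
  also have "\<dots> = - (1 / real N) * (\<Sum>t\<in>{1..N}. c \<bullet>
      (tdg \<phi> r \<gamma> (s t) (s (Suc t)) \<theta> - tdg \<phi> r \<gamma> (s t) (s (Suc t)) (theta_star \<phi> r \<gamma> s N)))"
    unfolding tdg_diff c_def[symmetric]
    by (simp add: inner_diff_left algebra_simps inner_commute sum_subtractf)
  finally show ?thesis by (simp add: c_def)
qed

lemma norm_diff_power2_le:
  fixes x y :: "'v::real_inner"
  shows "(norm (x - y))\<^sup>2 \<le> 2 * (norm x)\<^sup>2 + 2 * (norm y)\<^sup>2"
proof -
  have "(norm (x - y))\<^sup>2 + (norm (x + y))\<^sup>2 = 2 * (norm x)\<^sup>2 + 2 * (norm y)\<^sup>2"
    by (simp add: power2_norm_eq_inner inner_add_left inner_add_right inner_diff_left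
        inner_diff_right inner_commute)
  then show ?thesis
    by (smt (verit) zero_le_power2)
qed

lemma sum_norm_diff_mean_le:
  fixes e :: "'i \<Rightarrow> 'v::real_inner"
  assumes "finite I"
  shows "(\<Sum>t\<in>I. (norm (e t - (1 / real (card I)) *\<^sub>R (\<Sum>u\<in>I. e u)))\<^sup>2) \<le> (\<Sum>t\<in>I. (norm (e t))\<^sup>2)"
proof (cases "I = {}")
  case False
  define n where "n = real (card I)"
  define m where "m = (1 / n) *\<^sub>R (\<Sum>u\<in>I. e u)"
  have "n > 0" using assms False by (simp add: n_def card_gt_0_iff)
  then have sum_e: "(\<Sum>u\<in>I. e u) = n *\<^sub>R m" by (simp add: m_def)
  have "(\<Sum>t\<in>I. (norm (e t - m))\<^sup>2) = (\<Sum>t\<in>I. (norm (e t))\<^sup>2 - 2 * (e t \<bullet> m) + (norm m)\<^sup>2)"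
    by (intro sum.cong) (simp_all add: power2_norm_eq_inner inner_diff_left inner_diff_right inner_commute)
  also have "\<dots> = (\<Sum>t\<in>I. (norm (e t))\<^sup>2) - 2 * ((\<Sum>u\<in>I. e u) \<bullet> m) + n * (norm m)\<^sup>2"
    by (simp add: sum.distrib sum_subtractf sum_distrib_left[symmetric] inner_sum_left n_def)
  also have "\<dots> = (\<Sum>t\<in>I. (norm (e t))\<^sup>2) - n * (norm m)\<^sup>2"
    by (simp add: sum_e power2_norm_eq_inner)
  also have "\<dots> \<le> (\<Sum>t\<in>I. (norm (e t))\<^sup>2)"
    using \<open>n > 0\<close> by simp
  finally show ?thesis by (simp add: m_def n_def)
qed simp

lemma sum_norm_variance_reduced_step_le:
  fixes c :: "'v::real_inner" and d e :: "'i \<Rightarrow> 'v"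
  assumes "finite I"
  defines "m \<equiv> (1 / real (card I)) *\<^sub>R (\<Sum>u\<in>I. e u)"
  shows "(\<Sum>t\<in>I. (norm (c + \<alpha> *\<^sub>R (d t - e t + m)))\<^sup>2)
     \<le> real (card I) * (norm c)\<^sup>2 + 2 * \<alpha> * (\<Sum>t\<in>I. c \<bullet> d t)
       + 2 * \<alpha>\<^sup>2 * (\<Sum>t\<in>I. (norm (d t))\<^sup>2) + 2 * \<alpha>\<^sup>2 * (\<Sum>t\<in>I. (norm (e t))\<^sup>2)"
proof -
  have centred: "(\<Sum>t\<in>I. c \<bullet> (e t - m)) = 0"
  proof (cases "I = {}")
    case False
    with assms(1) show ?thesis
      by (simp add: m_def inner_diff_right sum_subtractf inner_sum_right[symmetric] card_gt_0_iff)
  qed simp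
  have expand: "(norm (c + \<alpha> *\<^sub>R (d t - e t + m)))\<^sup>2
      = (norm c)\<^sup>2 + 2 * \<alpha> * (c \<bullet> d t) - 2 * \<alpha> * (c \<bullet> (e t - m)) + \<alpha>\<^sup>2 * (norm (d t - (e t - m)))\<^sup>2"
    for t
  proof -
    have v: "d t - e t + m = d t - (e t - m)" by simp
    have sq: "(norm (c + \<alpha> *\<^sub>R v))\<^sup>2 = (norm c)\<^sup>2 + 2 * \<alpha> * (c \<bullet> v) + \<alpha>\<^sup>2 * (norm v)\<^sup>2"
      for v
      unfolding power2_norm_eq_inner
      by (simp add: inner_add_left inner_add_right power2_eq_square inner_commute algebra_simps)
    show ?thesis
      unfolding v sq inner_diff_right[of c "d t"] by (simp add: algebra_simps)
  qed
  have "(\<Sum>t\<in>I. (norm (d t - (e t - m)))\<^sup>2) \<le> (\<Sum>t\<in>I. 2 * (norm (d t))\<^sup>2 + 2 * (norm (e t - m))\<^sup>2)"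
    by (intro sum_mono norm_diff_power2_le)
  also have "\<dots> \<le> 2 * (\<Sum>t\<in>I. (norm (d t))\<^sup>2) + 2 * (\<Sum>t\<in>I. (norm (e t))\<^sup>2)"
    using sum_norm_diff_mean_le[OF assms(1), of e]
    by (simp add: sum.distrib sum_distrib_left[symmetric] m_def)
  finally have noise: "\<alpha>\<^sup>2 * (\<Sum>t\<in>I. (norm (d t - (e t - m)))\<^sup>2)
      \<le> \<alpha>\<^sup>2 * (2 * (\<Sum>t\<in>I. (norm (d t))\<^sup>2) + 2 * (\<Sum>t\<in>I. (norm (e t))\<^sup>2))"
    by (simp add: mult_left_mono)
  have "(\<Sum>t\<in>I. (norm (c + \<alpha> *\<^sub>R (d t - e t + m)))\<^sup>2)
      = real (card I) * (norm c)\<^sup>2 + 2 * \<alpha> * (\<Sum>t\<in>I. c \<bullet> d t) - 2 * \<alpha> * (\<Sum>t\<in>I. c \<bullet> (e t - m))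
        + \<alpha>\<^sup>2 * (\<Sum>t\<in>I. (norm (d t - (e t - m)))\<^sup>2)"
    by (simp only: expand sum.distrib sum_subtractf sum_distrib_left[symmetric]) simp
  with centred noise show ?thesis
    by (simp add: algebra_simps)
qed

lemma expectation_bind_pmf_finite:
  fixes h :: "'b \<Rightarrow> real"
  assumes "finite (set_pmf p)" "\<And>x. x \<in> set_pmf p \<Longrightarrow> finite (set_pmf (f x))"
  shows "measure_pmf.expectation (bind_pmf p f) h =
    measure_pmf.expectation p (\<lambda>x. measure_pmf.expectation (f x) h)"
  using assms
  by (subst pmf_expectation_bind[of "set_pmf p"])
    (auto simp: integral_measure_pmf_real[of "set_pmf p"] mult.commute)

context
  fixes \<phi> :: "'a \<Rightarrow> real^'d" and r :: "'a \<Rightarrow> 'a \<Rightarrow> real" and \<gamma> \<alpha> :: real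
    and s :: "nat \<Rightarrow> 'a" and N M :: nat
  assumes N_pos: "N \<ge> 1" and A_d_invertible: "invertible (A_d \<phi> \<gamma> s N)" and M_pos: "M \<ge> 1"
begin

abbreviation (input) "tstar \<equiv> theta_star \<phi> r \<gamma> s N"
abbreviation (input) "dist_opt \<equiv> \<lambda>\<theta>. (norm (\<theta> - tstar))\<^sup>2"
abbreviation (input) "fd \<equiv> f_d \<phi> r \<gamma> s N"
abbreviation (input) "wd \<equiv> w_d \<phi> r \<gamma> s N"
abbreviation (input) "inner_iterate \<equiv> svrg_inner \<phi> r \<gamma> s N \<alpha>"
abbreviation (input) "svrg_step \<theta>t \<theta> i \<equiv> \<theta> + \<alpha> *\<^sub>R (tdg \<phi> r \<gamma> (s i) (s (Suc i)) \<theta>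
    - tdg \<phi> r \<gamma> (s i) (s (Suc i)) \<theta>t + gbar \<phi> r \<gamma> s N \<theta>t)"

lemma finite_set_pmf_inner_iterate: "finite (set_pmf (inner_iterate \<theta>t k))"
  using N_pos by (induction k) (auto simp: set_pmf_of_set)

lemma finite_set_pmf_svrg_epoch: "finite (set_pmf (svrg_epoch \<phi> r \<gamma> s N \<alpha> M \<theta>t))"
  using M_pos by (auto simp: svrg_epoch_def set_pmf_of_set finite_set_pmf_inner_iterate)

lemma finite_set_pmf_svrg_run: "finite (set_pmf (svrg_run \<phi> r \<gamma> s N \<alpha> M \<theta>0 m))"
  by (induction m) (auto simp: finite_set_pmf_svrg_epoch)

lemma integrable_inner_iterate: "integrable (measure_pmf (inner_iterate \<theta>t k)) (h :: _ \<Rightarrow> real)"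
  by (rule integrable_measure_pmf_finite[OF finite_set_pmf_inner_iterate])

lemma integrable_svrg_run: "integrable (measure_pmf (svrg_run \<phi> r \<gamma> s N \<alpha> M \<theta>0 m)) (h :: _ \<Rightarrow> real)"
  by (rule integrable_measure_pmf_finite[OF finite_set_pmf_svrg_run])

lemma expected_dist_opt_svrg_step_le:
  "measure_pmf.expectation (map_pmf (svrg_step \<theta>t \<theta>) (pmf_of_set {1..N})) dist_opt
   \<le> dist_opt \<theta> - 2 * \<alpha> * fd \<theta> + 2 * \<alpha>\<^sup>2 * wd \<theta> + 2 * \<alpha>\<^sup>2 * wd \<theta>t"
proof -
  define g where "g = (\<lambda>t \<theta>. tdg \<phi> r \<gamma> (s t) (s (Suc t)) \<theta>)"
  define c where "c = \<theta> - tstar"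
  define d where "d = (\<lambda>t. g t \<theta> - g t tstar)"
  define e where "e = (\<lambda>t. g t \<theta>t - g t tstar)"
  define m where "m = (1 / real (card {1..N})) *\<^sub>R (\<Sum>t\<in>{1..N}. e t)"
  have N_gt0: "real N > 0" using N_pos by simp
  have "m = gbar \<phi> r \<gamma> s N \<theta>t - gbar \<phi> r \<gamma> s N tstar"
    by (simp add: m_def e_def gbar_def g_def sum_subtractf scaleR_diff_right)
  then have m_gbar: "m = gbar \<phi> r \<gamma> s N \<theta>t"
    using gbar_theta_star[OF A_d_invertible] by simp
  have step: "svrg_step \<theta>t \<theta> t - tstar = c + \<alpha> *\<^sub>R (d t - e t + m)" for t
    by (simp add: m_gbar c_def d_def e_def g_def algebra_simps)
  have sum_cd: "(\<Sum>t\<in>{1..N}. c \<bullet> d t) = - real N * fd \<theta>"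
    using N_gt0 unfolding f_d_eq_mean_inner_tdg_diff[of \<phi> r \<gamma> s N \<theta>] by (simp add: c_def d_def g_def)
  have sum_d: "(\<Sum>t\<in>{1..N}. (norm (d t))\<^sup>2) = real N * wd \<theta>"
    using N_gt0 unfolding w_d_def by (simp add: d_def g_def)
  have sum_e: "(\<Sum>t\<in>{1..N}. (norm (e t))\<^sup>2) = real N * wd \<theta>t"
    using N_gt0 unfolding w_d_def by (simp add: e_def g_def)
  have "measure_pmf.expectation (map_pmf (svrg_step \<theta>t \<theta>) (pmf_of_set {1..N})) dist_opt
      = (\<Sum>t\<in>{1..N}. (norm (c + \<alpha> *\<^sub>R (d t - e t + m)))\<^sup>2) / real N"
    using N_pos by (simp add: integral_pmf_of_set step)
  also have "\<dots> \<le> (real N * (norm c)\<^sup>2 + 2 * \<alpha> * (\<Sum>t\<in>{1..N}. c \<bullet> d t)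
      + 2 * \<alpha>\<^sup>2 * (\<Sum>t\<in>{1..N}. (norm (d t))\<^sup>2) + 2 * \<alpha>\<^sup>2 * (\<Sum>t\<in>{1..N}. (norm (e t))\<^sup>2)) / real N"
    using sum_norm_variance_reduced_step_le[of "{1..N}" c \<alpha> d e] N_gt0
    by (intro divide_right_mono) (simp_all add: m_def)
  also have "\<dots> = dist_opt \<theta> - 2 * \<alpha> * fd \<theta> + 2 * \<alpha>\<^sup>2 * wd \<theta> + 2 * \<alpha>\<^sup>2 * wd \<theta>t"
    unfolding sum_cd sum_d sum_e using N_gt0
    by (simp add: c_def add_divide_distrib diff_divide_distrib)
  finally show ?thesis .
qed

lemma expected_dist_opt_inner_iterate_Suc_le:
  "measure_pmf.expectation (inner_iterate \<theta>t (Suc k)) dist_opt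
   \<le> measure_pmf.expectation (inner_iterate \<theta>t k) dist_opt
     - 2 * \<alpha> * measure_pmf.expectation (inner_iterate \<theta>t k) fd
     + 2 * \<alpha>\<^sup>2 * measure_pmf.expectation (inner_iterate \<theta>t k) wd + 2 * \<alpha>\<^sup>2 * wd \<theta>t"
proof -
  have "measure_pmf.expectation (inner_iterate \<theta>t (Suc k)) dist_opt
     = measure_pmf.expectation (inner_iterate \<theta>t k)
         (\<lambda>\<theta>. measure_pmf.expectation (map_pmf (svrg_step \<theta>t \<theta>) (pmf_of_set {1..N})) dist_opt)"
    unfolding svrg_inner.simps
    by (rule expectation_bind_pmf_finite[OF finite_set_pmf_inner_iterate])
      (use N_pos in \<open>auto simp: set_pmf_of_set\<close>)
  also have "\<dots> \<le> measure_pmf.expectation (inner_iterate \<theta>t k)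
      (\<lambda>\<theta>. dist_opt \<theta> - 2 * \<alpha> * fd \<theta> + 2 * \<alpha>\<^sup>2 * wd \<theta> + 2 * \<alpha>\<^sup>2 * wd \<theta>t)"
    by (rule integral_mono[OF integrable_inner_iterate integrable_inner_iterate
          expected_dist_opt_svrg_step_le])
  finally show ?thesis
    by (simp add: integrable_inner_iterate)
qed

lemma expected_dist_opt_inner_iterate_telescope:
  "measure_pmf.expectation (inner_iterate \<theta>t k) dist_opt
     + 2 * \<alpha> * (\<Sum>j<k. measure_pmf.expectation (inner_iterate \<theta>t j) fd)
     - 2 * \<alpha>\<^sup>2 * (\<Sum>j<k. measure_pmf.expectation (inner_iterate \<theta>t j) wd)
   \<le> dist_opt \<theta>t + 2 * \<alpha>\<^sup>2 * real k * wd \<theta>t"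
proof (induction k)
  case (Suc k)
  then show ?case
    using expected_dist_opt_inner_iterate_Suc_le[of \<theta>t k] by (simp add: algebra_simps)
qed simp

lemma expectation_svrg_epoch:
  "measure_pmf.expectation (svrg_epoch \<phi> r \<gamma> s N \<alpha> M \<theta>t) h
   = (\<Sum>j<M. measure_pmf.expectation (inner_iterate \<theta>t j) h) / real M"
  unfolding svrg_epoch_def using M_pos
  by (subst pmf_expectation_bind_pmf_of_set)
    (auto simp: finite_set_pmf_inner_iterate atLeast0LessThan sum_divide_distrib
      divide_inverse_commute sum_distrib_left lessThan_empty_iff)

lemma svrg_epoch_bound:
  "2 * \<alpha> * real M * measure_pmf.expectation (svrg_epoch \<phi> r \<gamma> s N \<alpha> M \<theta>t) fd
   - 2 * real M * \<alpha>\<^sup>2 * measure_pmf.expectation (svrg_epoch \<phi> r \<gamma> s N \<alpha> M \<theta>t) wd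
   \<le> dist_opt \<theta>t + 2 * \<alpha>\<^sup>2 * real M * wd \<theta>t"
proof -
  have "0 \<le> measure_pmf.expectation (inner_iterate \<theta>t M) dist_opt"
    by (rule Bochner_Integration.integral_nonneg) auto
  moreover have "2 * \<alpha> * real M * measure_pmf.expectation (svrg_epoch \<phi> r \<gamma> s N \<alpha> M \<theta>t) fd
      - 2 * real M * \<alpha>\<^sup>2 * measure_pmf.expectation (svrg_epoch \<phi> r \<gamma> s N \<alpha> M \<theta>t) wd
    = 2 * \<alpha> * (\<Sum>j<M. measure_pmf.expectation (inner_iterate \<theta>t j) fd)
      - 2 * \<alpha>\<^sup>2 * (\<Sum>j<M. measure_pmf.expectation (inner_iterate \<theta>t j) wd)"
    using M_pos by (simp add: expectation_svrg_epoch)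
  ultimately show ?thesis
    using expected_dist_opt_inner_iterate_telescope[of \<theta>t M] by linarith
qed

lemma svrg_run_Suc_bound:
  "2 * \<alpha> * real M * measure_pmf.expectation (svrg_run \<phi> r \<gamma> s N \<alpha> M \<theta>0 (Suc m)) fd
   - 2 * real M * \<alpha>\<^sup>2 * measure_pmf.expectation (svrg_run \<phi> r \<gamma> s N \<alpha> M \<theta>0 (Suc m)) wd
   \<le> measure_pmf.expectation (svrg_run \<phi> r \<gamma> s N \<alpha> M \<theta>0 m) dist_opt
     + 2 * \<alpha>\<^sup>2 * real M * measure_pmf.expectation (svrg_run \<phi> r \<gamma> s N \<alpha> M \<theta>0 m) wd"
proof -
  let ?R = "svrg_run \<phi> r \<gamma> s N \<alpha> M \<theta>0 m"
  let ?E = "svrg_epoch \<phi> r \<gamma> s N \<alpha> M"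
  have expectation_Suc: "measure_pmf.expectation (svrg_run \<phi> r \<gamma> s N \<alpha> M \<theta>0 (Suc m)) h
      = measure_pmf.expectation ?R (\<lambda>\<theta>. measure_pmf.expectation (?E \<theta>) h)" for h :: "_ \<Rightarrow> real"
    unfolding svrg_run.simps
    by (rule expectation_bind_pmf_finite[OF finite_set_pmf_svrg_run finite_set_pmf_svrg_epoch])
  have "2 * \<alpha> * real M * measure_pmf.expectation (svrg_run \<phi> r \<gamma> s N \<alpha> M \<theta>0 (Suc m)) fd
      - 2 * real M * \<alpha>\<^sup>2 * measure_pmf.expectation (svrg_run \<phi> r \<gamma> s N \<alpha> M \<theta>0 (Suc m)) wd
    = measure_pmf.expectation ?R (\<lambda>\<theta>. 2 * \<alpha> * real M * measure_pmf.expectation (?E \<theta>) fd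
        - 2 * real M * \<alpha>\<^sup>2 * measure_pmf.expectation (?E \<theta>) wd)"
    unfolding expectation_Suc by (simp add: integrable_svrg_run)
  also have "\<dots> \<le> measure_pmf.expectation ?R (\<lambda>\<theta>. dist_opt \<theta> + 2 * \<alpha>\<^sup>2 * real M * wd \<theta>)"
    by (rule integral_mono[OF integrable_svrg_run integrable_svrg_run svrg_epoch_bound])
  finally show ?thesis
    by (simp add: integrable_svrg_run)
qed

end

theorem lemma1:
  fixes \<phi> :: "'a::finite \<Rightarrow> real^'d" and r :: "'a \<Rightarrow> 'a \<Rightarrow> real" and \<gamma> \<alpha> :: real
    and s :: "nat \<Rightarrow> 'a" and N M m :: nat and \<theta>0 :: "real^'d"
  assumes "\<And>x. norm (\<phi> x) \<le> 1"
    and "0 \<le> \<gamma>" and "\<gamma> < 1"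
    and "N \<ge> 1"
    and "invertible (A_d \<phi> \<gamma> s N)"
    and "\<alpha> > 0" and "M \<ge> 1" and "m \<ge> 1"
  shows "2 * \<alpha> * real M * measure_pmf.expectation (svrg_run \<phi> r \<gamma> s N \<alpha> M \<theta>0 m) (f_d \<phi> r \<gamma> s N)
         - 2 * real M * \<alpha>\<^sup>2 * measure_pmf.expectation (svrg_run \<phi> r \<gamma> s N \<alpha> M \<theta>0 m) (w_d \<phi> r \<gamma> s N)
       \<le> measure_pmf.expectation (svrg_run \<phi> r \<gamma> s N \<alpha> M \<theta>0 (m - 1))
            (\<lambda>\<theta>. (norm (\<theta> - theta_star \<phi> r \<gamma> s N))\<^sup>2)
         + 2 * \<alpha>\<^sup>2 * real M * measure_pmf.expectation (svrg_run \<phi> r \<gamma> s N \<alpha> M \<theta>0 (m - 1)) (w_d \<phi> r \<gamma> s N)"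
proof -
  obtain m' where "m = Suc m'"
    using \<open>m \<ge> 1\<close> by (cases m) auto
  then show ?thesis
    using svrg_run_Suc_bound[OF \<open>N \<ge> 1\<close> \<open>invertible (A_d \<phi> \<gamma> s N)\<close> \<open>M \<ge> 1\<close>] by simp
qed

end
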